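(* Let $d\in\mathbb{N}$ and $\mathcal{M}\subseteq\mathbb{N}_0^d$ with $\boldsymbol 0\notin\mathcal{M}$. Then $\min(\mathcal{M})=\min(P(\mathcal{M}))$. Consequently $\min(\mathcal{M})=\min(\mathcal{M}^i)$ for all $i\ge 0$, and $\min(\mathcal{M})=\min(\mathcal{M}^\infty)$ whenever the limit $\mathcal{M}^\infty$ exists.
   Context: For $d\in\mathbb{N}$ a game is a set $\mathcal{M}\subseteq\mathbb{N}_0^d$ of moves. From position $\boldsymbol x\in\mathbb{N}_0^d$ a player may move to $\boldsymbol y\in\mathbb{N}_0^d$ iff $\boldsymbol x-\boldsymbol y\in\mathcal{M}$. Misère play: a player who cannot move wins. If $\boldsymbol 0\in\mathcal{M}$, $P(\mathcal{M})=\varnothing$. Otherwise: a position is an N-position if it has no option or some option is a P-position; otherwise it is a P-position; $P(\mathcal{M})$ denotes the set of P-positions. The $\star$-operator is $\mathcal{M}^\star=P(\mathcal{M})$; $\mathcal{M}^0=\mathcal{M}$, $\mathcal{M}^i=(\mathcal{M}^{i-1})^\star$. The limit $\mathcal{M}^\infty$ exists if every $\boldsymbol x$ is eventually always in or eventually always outside $\mathcal{M}^i$, and then is the set of those eventually always in. $\mathbb{N}_0^d$ carries the componentwise partial order $\preceq$; $\min(S)$ denotes the set of minimal elements of $S$, with $\min(\varnothing)=\varnothing$. *)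

theory Defs
  imports Main
begin

text \<open>Positions in N_0^d are functions 'd \<Rightarrow> nat for a finite index type 'd (d = CARD('d)).
  The componentwise order is the pointwise order on functions.\<close>

definition is_option :: "('d \<Rightarrow> nat) set \<Rightarrow> ('d \<Rightarrow> nat) \<Rightarrow> ('d \<Rightarrow> nat) \<Rightarrow> bool" where
  "is_option M x y \<longleftrightarrow> y \<le> x \<and> (\<lambda>i. x i - y i) \<in> M"

function isP :: "('d::finite \<Rightarrow> nat) set \<Rightarrow> ('d \<Rightarrow> nat) \<Rightarrow> bool" where
  "isP M x = ((\<lambda>_. 0) \<notin> M \<and> (\<exists>y. is_option M x y) \<and>
      (\<forall>y\<in>{y. (\<lambda>_. 0) \<notin> M \<and> is_option M x y}. \<not> isP M y))"
  by auto
termination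
proof (relation "measure (\<lambda>(M, x::'d::finite \<Rightarrow> nat). sum x UNIV)")
  show "wf (measure (\<lambda>(M, x::'d::finite \<Rightarrow> nat). sum x UNIV))" by simp
next
  fix M and x y :: "'d::finite \<Rightarrow> nat"
  assume "y \<in> {y. (\<lambda>_. 0) \<notin> M \<and> is_option M x y}"
  hence nz: "(\<lambda>_. 0) \<notin> M" and le: "y \<le> x" and inM: "(\<lambda>i. x i - y i) \<in> M"
    by (auto simp: is_option_def)
  have "y \<noteq> x" using nz inM by auto
  then obtain j where j: "y j \<noteq> x j" by auto
  have lej: "\<And>i. y i \<le> x i" using le by (simp add: le_fun_def)
  have "y j < x j" using lej[of j] j by simp
  hence "sum y UNIV < sum x UNIV"
    using lej \<open>y j < x j\<close> by (intro sum_strict_mono_ex1) auto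
  thus "((M, y), (M, x)) \<in> measure (\<lambda>(M, x::'d::finite \<Rightarrow> nat). sum x UNIV)" by simp
qed

definition Ppos :: "('d::finite \<Rightarrow> nat) set \<Rightarrow> ('d \<Rightarrow> nat) set" where
  "Ppos M = {x. isP M x}"

definition Miter :: "('d::finite \<Rightarrow> nat) set \<Rightarrow> nat \<Rightarrow> ('d \<Rightarrow> nat) set" where
  "Miter M i = (Ppos ^^ i) M"

definition limit_exists :: "('d::finite \<Rightarrow> nat) set \<Rightarrow> bool" where
  "limit_exists M \<longleftrightarrow> (\<forall>x. (\<exists>N. \<forall>i\<ge>N. x \<in> Miter M i) \<or> (\<exists>N. \<forall>i\<ge>N. x \<notin> Miter M i))"

definition Mlim :: "('d::finite \<Rightarrow> nat) set \<Rightarrow> ('d \<Rightarrow> nat) set" where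
  "Mlim M = {x. \<exists>N. \<forall>i\<ge>N. x \<in> Miter M i}"

definition minset :: "('d \<Rightarrow> nat) set \<Rightarrow> ('d \<Rightarrow> nat) set" where
  "minset S = {x \<in> S. \<forall>y\<in>S. y \<le> x \<longrightarrow> y = x}"

end

theory Submission
  imports Defs
begin

text \<open>Every minimal move x is a P-position: its only options are reached by moves below x,
  hence by x itself, and lead to the terminal position 0, which (0 not being a move) is an
  N-position. Conversely every P-position has an option, so it lies above some move. These two
  facts already force M and P(M) to have the same minimal elements; iterating gives the claim
  for every M^i, and then for the limit, whose elements all lie in some M^i.\<close>

declare isP.simps[simp del]

lemma minset_below:
  fixes S :: "('d::finite \<Rightarrow> nat) set"
  assumes "x \<in> S"
  shows "\<exists>m\<in>minset S. m \<le> x"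
  using assms
proof (induction "sum x UNIV" arbitrary: x rule: less_induct)
  case less
  show ?case
  proof (cases "x \<in> minset S")
    case False
    then obtain y where y: "y \<in> S" "y \<le> x" "y \<noteq> x"
      using less.prems by (auto simp: minset_def)
    then obtain j where "y j < x j"
      by (metis le_funD order_le_neq_trans ext)
    with y(2) have "sum y UNIV < sum x UNIV"
      by (intro sum_strict_mono_ex1) (auto simp: le_fun_def)
    with less.hyps y(1) obtain m where "m \<in> minset S" "m \<le> y" by blast
    with y(2) show ?thesis by (meson order_trans)
  qed auto
qed

lemma minset_eqI:
  fixes S T :: "('d::finite \<Rightarrow> nat) set"
  assumes min_in: "minset S \<subseteq> T"
    and above: "\<And>t. t \<in> T \<Longrightarrow> \<exists>s\<in>S. s \<le> t"
  shows "minset T = minset S"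
proof
  show "minset T \<subseteq> minset S"
  proof
    fix x assume x: "x \<in> minset T"
    then obtain s where "s \<in> S" "s \<le> x" using above by (auto simp: minset_def)
    then obtain m where m: "m \<in> minset S" "m \<le> x"
      using minset_below by (meson order_trans)
    with x min_in have "m = x" by (auto simp: minset_def)
    with m show "x \<in> minset S" by simp
  qed
next
  show "minset S \<subseteq> minset T"
  proof
    fix x assume x: "x \<in> minset S"
    have "y = x" if "y \<in> T" "y \<le> x" for y
    proof -
      obtain s where "s \<in> S" "s \<le> y" using above \<open>y \<in> T\<close> by blast
      with x \<open>y \<le> x\<close> have "s = x" by (auto simp: minset_def intro: order_trans)
      with \<open>s \<le> y\<close> \<open>y \<le> x\<close> show "y = x" by simp
    qed
    with x min_in show "x \<in> minset T" by (auto simp: minset_def)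
  qed
qed

lemma isP_imp_move_below:
  assumes "isP M x"
  shows "\<exists>m\<in>M. m \<le> x"
proof -
  obtain y where "y \<le> x" "(\<lambda>i. x i - y i) \<in> M"
    using assms by (subst (asm) isP.simps) (auto simp: is_option_def)
  then show ?thesis by (intro bexI[of _ "\<lambda>i. x i - y i"]) (auto simp: le_fun_def)
qed

lemma not_isP_zero: "\<not> isP M (\<lambda>_. 0)"
proof
  assume P: "isP M (\<lambda>_. 0)"
  then obtain y where "y \<le> (\<lambda>_. 0)" "(\<lambda>i. 0 - y i) \<in> M"
    by (subst (asm) isP.simps) (auto simp: is_option_def)
  then have "(\<lambda>_. 0) \<in> M" by simp
  with P show False by (subst (asm) isP.simps) blast
qed

lemma zero_notin_Ppos: "(\<lambda>_. 0) \<notin> Ppos M"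
  by (simp add: Ppos_def not_isP_zero)

lemma minset_imp_isP:
  assumes zero: "(\<lambda>_. 0) \<notin> M" and x: "x \<in> minset M"
  shows "isP M x"
proof -
  have "is_option M x (\<lambda>_. 0)" using x by (simp add: is_option_def le_fun_def minset_def)
  moreover have "y = (\<lambda>_. 0)" if "is_option M x y" for y
  proof -
    have "y \<le> x" and "(\<lambda>i. x i - y i) \<in> M" using that by (auto simp: is_option_def)
    moreover have "(\<lambda>i. x i - y i) \<le> x" by (simp add: le_fun_def)
    ultimately have "(\<lambda>i. x i - y i) = x" using x by (auto simp: minset_def)
    with \<open>y \<le> x\<close> show ?thesis
      by (simp add: le_fun_def fun_eq_iff) (metis diff_diff_cancel diff_self_eq_0)
  qed
  ultimately show ?thesis using zero not_isP_zero by (subst isP.simps) blast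
qed

lemma minset_Ppos:
  assumes "(\<lambda>_. 0) \<notin> M"
  shows "minset (Ppos M) = minset M"
  using minset_imp_isP[OF assms] isP_imp_move_below
  by (intro minset_eqI) (auto simp: Ppos_def)

lemma minset_Miter:
  assumes "(\<lambda>_. 0) \<notin> M"
  shows "minset (Miter M i) = minset M"
proof (induction i)
  case (Suc i)
  have "(\<lambda>_. 0) \<notin> Miter M i"
    using assms zero_notin_Ppos by (cases i) (simp_all add: Miter_def)
  with Suc show ?case by (simp add: Miter_def minset_Ppos)
qed (simp add: Miter_def)

text \<open>Mlim is the lim inf of the iterates.\<close>

lemma minset_Mlim:
  assumes "(\<lambda>_. 0) \<notin> M"
  shows "minset (Mlim M) = minset M"
proof (rule minset_eqI)
  show "minset M \<subseteq> Mlim M"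
    using minset_Miter[OF assms] by (auto simp: Mlim_def minset_def)
next
  fix t assume "t \<in> Mlim M"
  then obtain N where "t \<in> Miter M N" by (auto simp: Mlim_def)
  then obtain m where "m \<in> minset (Miter M N)" "m \<le> t" using minset_below by blast
  then show "\<exists>s\<in>M. s \<le> t" using minset_Miter[OF assms] by (auto simp: minset_def)
qed

theorem lemma2:
  fixes M :: "('d::finite \<Rightarrow> nat) set"
  assumes "(\<lambda>_. 0) \<notin> M"
  shows "minset M = minset (Ppos M)
    \<and> (\<forall>i. minset M = minset (Miter M i))
    \<and> (limit_exists M \<longrightarrow> minset M = minset (Mlim M))"
  using minset_Ppos[OF assms] minset_Miter[OF assms] minset_Mlim[OF assms] by simp

end
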